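(* Under the setting below, for $t$ drawn uniformly from $\{2,\dots,T+1\}$ there exists some $0<\sigma<\gamma$ such that $$ \mathbb{E}\left(\mathrm{dist}(0,\partial F(x_1^t,x_2^t))^2\right) \leq \tfrac{C}{T (\gamma-\sigma)}\left(\Psi(u^1)-\inf_{u}\Psi(u)+\left(\tfrac{3(\gamma-\sigma)}{\rho C}+\tfrac1{M\rho}\right)\mathbb{E}(\Upsilon_1)\right). $$
   Context: Here $\partial F$ is the (general/limiting) subdifferential. Setting: $F\colon \mathbb{R}^{d_1}\times \mathbb{R}^{d_2}\to(-\infty,\infty]$, $F(x_1,x_2)=H(x_1,x_2)+f(x_1)+g(x_2)$ with proper, lower semicontinuous $f,g$ bounded from below, $H$ continuously differentiable, $\underline F:=\inf F>-\infty$; $H=\frac1n\sum_{i=1}^n h_i$ where each $h_i$ has globally $M$-Lipschitz gradient. For every $x_2$, $\nabla_{x_1}H(\cdot,x_2)$ is globally Lipschitz with constant $L_1(x_2)$, and for every $x_1$, $\nabla_{x_2}H(x_1,\cdot)$ is globally Lipschitz with constant $L_2(x_1)$; there are $\lambda_i^-,\lambda_i^+>0$ with $\lambda_1^-\le L_1(x_2^k)\le\lambda_1^+$, $\lambda_2^-\le L_2(x_1^k)\le\lambda_2^+$ for all $k$. $(x_1^k,x_2^k)_k$ is generated by iSPALM: with $\mathrm{prox}_\tau^f(x):=\operatorname{argmin}_y\{\tfrac\tau2\|x-y\|^2+f(y)\}$ and $(x_1^{-1},x_2^{-1})=(x_1^0,x_2^0)$: $y_1^k=x_1^k+\alpha_1^k(x_1^k-x_1^{k-1})$,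 $z_1^k=x_1^k+\beta_1^k(x_1^k-x_1^{k-1})$, $x_1^{k+1}\in\mathrm{prox}_{\tau_1^k}^f(y_1^k-\tfrac1{\tau_1^k}\tilde\nabla_{x_1}H(z_1^k,x_2^k))$; $y_2^k=x_2^k+\alpha_2^k(x_2^k-x_2^{k-1})$, $z_2^k=x_2^k+\beta_2^k(x_2^k-x_2^{k-1})$, $x_2^{k+1}\in\mathrm{prox}_{\tau_2^k}^g(y_2^k-\tfrac1{\tau_2^k}\tilde\nabla_{x_2}H(x_1^{k+1},z_2^k))$. $\tilde\nabla$ is inertial variance-reduced with constants $V_1,V_\Upsilon\ge0$, $\rho\in(0,1]$: for any sequence with $x^{-1}=x^0$ and $0\le\beta_i^k<\bar\beta_i$ there are random variables $\Upsilon_k\ge0$ with $\mathbb{E}(\Upsilon_1)<\infty$ such that, with $\mathbb{E}_k$ the conditional expectation given the first $k$ iterates, (i) $\mathbb{E}_k(\|\tilde\nabla_{x_1}H(z_1^k,x_2^k)-\nabla_{x_1}H(z_1^k,x_2^k)\|^2+\|\tilde\nabla_{x_2}H(x_1^{k+1},z_2^k)-\nabla_{x_2}H(x_1^{k+1},z_2^k)\|^2)\le\Upsilon_k+V_1(\mathbb{E}_k\|x^{k+1}-x^k\|^2+\|x^k-x^{k-1}\|^2+\|x^{k-1}-x^{k-2}\|^2)$; (ii) $\mathbb{E}_k(\Upsilon_{k+1})\le(1-\rho)\Upsilon_k+V_\Upsilon(\mathbb{E}_k\|x^{k+1}-x^k\|^2+\|x^k-x^{k-1}\|^2+\|x^{k-1}-x^{k-2}\|^2)$;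 (iii) $\mathbb{E}\|x^k-x^{k-1}\|^2\to0$ implies $\mathbb{E}(\Upsilon_k)\to0$. Parameter conditions: there exist $\epsilon,\varepsilon>0$ such that for all $k$, $i=1,2$: $0\le\alpha_i^k\le\bar\alpha_i$ with $0<\bar\alpha_i<\tfrac{1-\epsilon}2$, $0\le\beta_i^k\le\bar\beta_i$ with $0<\bar\beta_i\le1$; $\tau_1^k=\frac{(1+\epsilon)\delta_1+M+L_1(x_2^k)+S}{1-\alpha_1^k}$, $\tau_2^k=\frac{(1+\epsilon)\delta_2+M+L_2(x_1^{k+1})+S}{1-\alpha_2^k}$, $S:=4\tfrac{\rho V_1+V_\Upsilon}{\rho M}+\varepsilon$, $\delta_i:=\frac{(M+\lambda_i^+)\bar\alpha_i+2\lambda_i^+\bar\beta_i^2+S}{1-2\bar\alpha_i-\epsilon}$. Notation: $\Psi(u):= F(u_{11},u_{12})+\tfrac{\delta_1}{2}\|u_{11}-u_{21}\|^2+\tfrac{\delta_2}{2}\|u_{12}-u_{22}\|^2+\tfrac{S}{4}(\|u_{21}-u_{31}\|^2+\|u_{22}-u_{32}\|^2)$ for $u=(u_{11},u_{12},u_{21},u_{22},u_{31},u_{32})\in(\mathbb{R}^{d_1}\times\mathbb{R}^{d_2})^3$, and $u^k := (x_1^k,x_2^k,x_1^{k-1},x_2^{k-1},x_1^{k-2},x_2^{k-2})$. The constant $\gamma>0$ is one for which $\mathbb{E}(\Psi(u^k)-\Psi(u^{k+1}))\ge\gamma\mathbb{E}\|u^{k+1}-u^k\|^2+\tfrac1{M\rho}\mathbb{E}(\Upsilon_{k+1}-\Upsilon_k)$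 holds for all $k$ (in the proof $\gamma=\tfrac12\min(\epsilon\delta_1,\epsilon\delta_2,\varepsilon)$), and $C>0$ is a constant with $\mathbb{E}(\mathrm{dist}(0,\partial F(x_1^{k+1},x_2^{k+1}))^2)\le C\mathbb{E}\|u^{k+1}-u^k\|^2+3\mathbb{E}(\Upsilon_k)$ for all $k$. *)

theory Defs
  imports "HOL-Analysis.Analysis" "HOL-Probability.Probability"
begin

definition proper_fun :: "('c \<Rightarrow> ereal) \<Rightarrow> bool" where
  "proper_fun f \<longleftrightarrow> (\<forall>x. f x \<noteq> -\<infinity>) \<and> (\<exists>x. f x \<noteq> \<infinity>)"

definition lsc_fun :: "('c::topological_space \<Rightarrow> ereal) \<Rightarrow> bool" where
  "lsc_fun f \<longleftrightarrow> (\<forall>x. f x \<le> Liminf (at x) f)"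

definition frechet_subdiff :: "('c::real_inner \<Rightarrow> ereal) \<Rightarrow> 'c \<Rightarrow> 'c set" where
  "frechet_subdiff F x = {v. \<bar>F x\<bar> \<noteq> \<infinity> \<and>
     Liminf (at x) (\<lambda>y. (F y - F x - ereal (inner v (y - x))) / ereal (norm (y - x))) \<ge> 0}"

definition limiting_subdiff :: "('c::real_inner \<Rightarrow> ereal) \<Rightarrow> 'c \<Rightarrow> 'c set" where
  "limiting_subdiff F x = {v. \<exists>xs vs. xs \<longlonglongrightarrow> x \<and> (\<lambda>k. F (xs k)) \<longlonglongrightarrow> F x \<and>
     (\<forall>k. vs k \<in> frechet_subdiff F (xs k)) \<and> vs \<longlonglongrightarrow> v}"

text \<open>distance of 0 to a set; the distance to the empty set is +infinity\<close>
definition dist0 :: "'c::real_normed_vector set \<Rightarrow> ennreal" where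
  "dist0 S = (INF v\<in>S. ennreal (norm v))"

definition prox :: "real \<Rightarrow> ('c::real_normed_vector \<Rightarrow> ereal) \<Rightarrow> 'c \<Rightarrow> 'c set" where
  "prox \<tau> f x = {y. \<forall>z. ereal (\<tau> / 2 * (norm (x - y))\<^sup>2) + f y \<le> ereal (\<tau> / 2 * (norm (x - z))\<^sup>2) + f z}"

section \<open>Iterates (natural-number indexing; x^(-1) = x^(-2) = x^0 via truncated subtraction)\<close>

definition extrap :: "(nat \<Rightarrow> 'w \<Rightarrow> real) \<Rightarrow> (nat \<Rightarrow> 'w \<Rightarrow> 'c::real_vector) \<Rightarrow> nat \<Rightarrow> 'w \<Rightarrow> 'c" where
  "extrap a x k \<omega> = x k \<omega> + a k \<omega> *\<^sub>R (x k \<omega> - x (k - 1) \<omega>)"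

definition pair_seq :: "(nat \<Rightarrow> 'w \<Rightarrow> 'a) \<Rightarrow> (nat \<Rightarrow> 'w \<Rightarrow> 'b) \<Rightarrow> nat \<Rightarrow> 'w \<Rightarrow> 'a \<times> 'b" where
  "pair_seq x1 x2 k \<omega> = (x1 k \<omega>, x2 k \<omega>)"

definition useq :: "(nat \<Rightarrow> 'w \<Rightarrow> 'a \<times> 'b) \<Rightarrow> nat \<Rightarrow> 'w \<Rightarrow> ('a \<times> 'b) \<times> ('a \<times> 'b) \<times> ('a \<times> 'b)" where
  "useq x k \<omega> = (x k \<omega>, x (k - 1) \<omega>, x (k - 2) \<omega>)"

definition iter_sigma :: "'w measure \<Rightarrow> (nat \<Rightarrow> 'w \<Rightarrow> 'c::topological_space) \<Rightarrow> nat \<Rightarrow> 'w measure" where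
  "iter_sigma P x k = sigma (space P) (\<Union>j\<le>k. {x j -` A \<inter> space P | A. A \<in> sets borel})"

definition Psi :: "('a::real_normed_vector \<times> 'b::real_normed_vector \<Rightarrow> ereal) \<Rightarrow> real \<Rightarrow> real \<Rightarrow> real
    \<Rightarrow> ('a \<times> 'b) \<times> ('a \<times> 'b) \<times> ('a \<times> 'b) \<Rightarrow> ereal" where
  "Psi F d1 d2 S u = (case u of ((u11, u12), (u21, u22), (u31, u32)) \<Rightarrow>
     F (u11, u12) + ereal (d1 / 2 * (norm (u11 - u21))\<^sup>2 + d2 / 2 * (norm (u12 - u22))\<^sup>2
       + S / 4 * ((norm (u21 - u31))\<^sup>2 + (norm (u22 - u32))\<^sup>2)))"

end

theory Submission
  imports Defs
begin

text \<open>
  Let \<open>D\<^sub>k\<close> be the expected \<open>\<Psi>\<close>-gap at \<open>u\<^sup>k\<close>, \<open>N\<^sub>k\<close> the expected value of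
  \<open>\<parallel>u\<^sup>k\<^sup>+\<^sup>1 - u\<^sup>k\<parallel>\<^sup>2\<close> and \<open>U\<^sub>k\<close> that of \<open>\<Upsilon>\<^sub>k\<close>.
  Summing the descent inequality telescopes to \<open>\<gamma> \<Sum> N\<^sub>k \<le> D\<^sub>1 + U\<^sub>1/(M\<rho>)\<close>, and summing the
  expected variance recursion \<open>U\<^sub>k\<^sub>+\<^sub>1 \<le> (1 - \<rho>) U\<^sub>k + V\<^sub>\<Upsilon> N\<^sub>k\<close> gives
  \<open>\<rho> \<Sum> U\<^sub>k \<le> U\<^sub>1 + V\<^sub>\<Upsilon> \<Sum> N\<^sub>k\<close>. Inserting both into the expected subgradient bound
  \<open>C N\<^sub>k + 3 U\<^sub>k\<close> bounds the sum of the expected squared distances by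
  \<open>(C + 3V\<^sub>\<Upsilon>/\<rho>)/\<gamma> \<cdot> (D\<^sub>1 + U\<^sub>1/(M\<rho>)) + 3U\<^sub>1/\<rho>\<close>; it remains to pick \<open>\<sigma>\<close> with
  \<open>C/(\<gamma> - \<sigma>) \<ge> (C + 3V\<^sub>\<Upsilon>/\<rho>)/\<gamma>\<close>.
\<close>

lemma sum_telescope_le:
  fixes A B R :: "nat \<Rightarrow> 'a::ordered_comm_monoid_add"
  assumes step_le: "\<And>k. A (Suc k) + B k \<le> A k + R k" and "m \<le> n"
  shows "A n + sum B {m..<n} \<le> A m + sum R {m..<n}"
  using \<open>m \<le> n\<close>
proof (induction n rule: dec_induct)
  case base
  show ?case by simp
next
  case (step n)
  have "A (Suc n) + sum B {m..<Suc n} = (A (Suc n) + B n) + sum B {m..<n}"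
    using step.hyps by (simp add: add_ac)
  also have "\<dots> \<le> (A n + R n) + sum B {m..<n}"
    by (intro add_right_mono step_le)
  also have "\<dots> = (A n + sum B {m..<n}) + R n"
    by (simp add: add_ac)
  also have "\<dots> \<le> (A m + sum R {m..<n}) + R n"
    using step.IH by (rule add_right_mono)
  also have "\<dots> = A m + sum R {m..<Suc n}"
    using step.hyps by (simp add: add_ac)
  finally show ?case .
qed

lemma contraction_sum_le:
  fixes U W :: "nat \<Rightarrow> ennreal"
  assumes contraction: "\<And>k. U (Suc k) \<le> ennreal (1 - \<rho>) * U k + W k"
    and "0 < \<rho>" "\<rho> \<le> 1" "m \<le> n"
  shows "ennreal \<rho> * (\<Sum>k\<in>{m..<n}. U k) \<le> U m + (\<Sum>k\<in>{m..<n}. W k)"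
proof -
  have step: "U (Suc k) + ennreal \<rho> * U k \<le> U k + W k" for k
  proof -
    have split: "ennreal (1 - \<rho>) * U k + ennreal \<rho> * U k = U k"
      using \<open>0 < \<rho>\<close> \<open>\<rho> \<le> 1\<close>
      by (simp add: distrib_right[symmetric] ennreal_plus[symmetric] del: ennreal_plus)
    have "U (Suc k) + ennreal \<rho> * U k \<le> (ennreal (1 - \<rho>) * U k + W k) + ennreal \<rho> * U k"
      using contraction by (rule add_right_mono)
    also have "\<dots> = U k + W k"
      using split by (simp add: add_ac)
    finally show ?thesis .
  qed
  have "ennreal \<rho> * (\<Sum>k\<in>{m..<n}. U k) \<le> U n + (\<Sum>k\<in>{m..<n}. ennreal \<rho> * U k)"
    unfolding sum_distrib_left by (rule add_increasing[OF zero_le order_refl])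
  also have "\<dots> \<le> U m + (\<Sum>k\<in>{m..<n}. W k)"
    using step \<open>m \<le> n\<close> by (rule sum_telescope_le)
  finally show ?thesis .
qed

lemma descent_sum_bound:
  fixes D N U E :: "nat \<Rightarrow> ennreal" and \<gamma> a C \<rho> V :: real
  assumes descent: "\<And>k. D (Suc k) + ennreal \<gamma> * N k + ennreal a * U (Suc k) \<le> D k + ennreal a * U k"
    and subgrad: "\<And>k. E (Suc k) \<le> ennreal C * N k + 3 * U k"
    and variance: "\<And>k. U (Suc k) \<le> ennreal (1 - \<rho>) * U k + ennreal V * N k"
    and params: "\<gamma> > 0" "C \<ge> 0" "0 < \<rho>" "\<rho> \<le> 1" "V \<ge> 0"
  shows "(\<Sum>t\<in>{2..T+1}. E t)
    \<le> ennreal ((C + 3 * V / \<rho>) / \<gamma>) * (D 1 + ennreal a * U 1) + ennreal (3 / \<rho>) * U 1"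
proof -
  let ?I = "{1..<Suc T}"
  let ?SN = "\<Sum>k\<in>?I. N k" and ?SU = "\<Sum>k\<in>?I. U k"
  have N_bound: "ennreal \<gamma> * ?SN \<le> D 1 + ennreal a * U 1"
  proof -
    have "ennreal \<gamma> * ?SN \<le> D (Suc T) + ennreal a * U (Suc T) + (\<Sum>k\<in>?I. ennreal \<gamma> * N k)"
      unfolding sum_distrib_left by (rule add_increasing[OF zero_le order_refl])
    also have "\<dots> \<le> D 1 + ennreal a * U 1 + (\<Sum>k\<in>?I. 0)"
      by (rule sum_telescope_le) (use descent in \<open>simp_all add: add_ac\<close>)
    finally show ?thesis by simp
  qed
  have U_bound: "ennreal \<rho> * ?SU \<le> U 1 + ennreal V * ?SN"
    using contraction_sum_le[where U = U and W = "\<lambda>k. ennreal V * N k" and m = 1 and n = "Suc T",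
        OF variance \<open>0 < \<rho>\<close> \<open>\<rho> \<le> 1\<close>]
    by (simp only: sum_distrib_left)
  have "(\<Sum>t\<in>{2..T+1}. E t) = (\<Sum>k\<in>{1..T}. E (Suc k))"
    using sum.shift_bounds_cl_Suc_ivl[of E 1 T] by (simp add: numeral_2_eq_2)
  also have "\<dots> = (\<Sum>k\<in>?I. E (Suc k))"
    by (simp only: atLeastLessThanSuc_atLeastAtMost)
  also have "\<dots> \<le> (\<Sum>k\<in>?I. ennreal C * N k + 3 * U k)"
    by (rule sum_mono) (rule subgrad)
  also have "\<dots> = ennreal C * ?SN + 3 * ?SU"
    by (simp only: sum.distrib sum_distrib_left)
  also have "\<dots> \<le> ennreal C * ?SN + ennreal (3 / \<rho>) * (U 1 + ennreal V * ?SN)"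
  proof (rule add_left_mono)
    have "3 * ?SU = ennreal (3 / \<rho>) * (ennreal \<rho> * ?SU)"
      using \<open>0 < \<rho>\<close> by (simp add: mult.assoc[symmetric] ennreal_mult[symmetric])
    also have "\<dots> \<le> ennreal (3 / \<rho>) * (U 1 + ennreal V * ?SN)"
      using U_bound by (rule mult_left_mono) simp
    finally show "3 * ?SU \<le> ennreal (3 / \<rho>) * (U 1 + ennreal V * ?SN)" .
  qed
  also have "\<dots> = (ennreal C + ennreal (3 * V / \<rho>)) * ?SN + ennreal (3 / \<rho>) * U 1"
  proof -
    have "ennreal (3 / \<rho>) * (ennreal V * x) = ennreal (3 * V / \<rho>) * x" for x
      using \<open>0 < \<rho>\<close> \<open>V \<ge> 0\<close> by (simp add: ennreal_mult'[symmetric] mult.assoc[symmetric])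
    then show ?thesis by (simp only: distrib_left distrib_right add_ac)
  qed
  also have "\<dots> = ennreal ((C + 3 * V / \<rho>) / \<gamma>) * (ennreal \<gamma> * ?SN) + ennreal (3 / \<rho>) * U 1"
  proof -
    have "ennreal C + ennreal (3 * V / \<rho>) = ennreal ((C + 3 * V / \<rho>) / \<gamma>) * ennreal \<gamma>"
      using params by (simp add: ennreal_plus[symmetric] ennreal_mult[symmetric] del: ennreal_plus)
    then show ?thesis by (simp only: mult.assoc)
  qed
  also have "\<dots> \<le> ennreal ((C + 3 * V / \<rho>) / \<gamma>) * (D 1 + ennreal a * U 1) + ennreal (3 / \<rho>) * U 1"
    using N_bound by (intro add_right_mono mult_left_mono) simp_all
  finally show ?thesis .
qed

lemma averaged_descent_rate:
  fixes D N U E :: "nat \<Rightarrow> ennreal" and \<gamma> a C \<rho> V :: real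
  assumes descent: "\<And>k. D (Suc k) + ennreal \<gamma> * N k + ennreal a * U (Suc k) \<le> D k + ennreal a * U k"
    and subgrad: "\<And>k. E (Suc k) \<le> ennreal C * N k + 3 * U k"
    and variance: "\<And>k. U (Suc k) \<le> ennreal (1 - \<rho>) * U k + ennreal V * N k"
    and params: "\<gamma> > 0" "C > 0" "0 < \<rho>" "\<rho> \<le> 1" "V \<ge> 0" and "a \<ge> 0"
  shows "\<exists>\<sigma>. 0 < \<sigma> \<and> \<sigma> < \<gamma> \<and> (\<forall>T::nat. T \<ge> 1 \<longrightarrow>
     ennreal (1 / real T) * (\<Sum>t\<in>{2..T+1}. E t)
     \<le> ennreal (C / (real T * (\<gamma> - \<sigma>))) * (D 1 + ennreal (3 * (\<gamma> - \<sigma>) / (\<rho> * C) + a) * U 1))"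
proof -
  define c where "c = 3 * V / \<rho>"
  have "c \<ge> 0" using \<open>0 < \<rho>\<close> \<open>V \<ge> 0\<close> by (simp add: c_def)
  \<comment> \<open>taking \<open>\<gamma> - \<sigma>\<close> to be half of \<open>\<gamma> C / (c + C)\<close> keeps \<open>\<sigma> > 0\<close> even when \<open>c = 0\<close>\<close>
  define \<sigma> where "\<sigma> = \<gamma> * (2 * c + C) / (2 * (c + C))"
  have gap: "\<gamma> - \<sigma> = \<gamma> * C / (2 * (c + C))"
    using \<open>c \<ge> 0\<close> \<open>C > 0\<close> by (simp add: \<sigma>_def field_simps)
  have "0 < \<sigma>"
    using \<open>c \<ge> 0\<close> \<open>C > 0\<close> \<open>\<gamma> > 0\<close> by (simp add: \<sigma>_def)
  have "0 < \<gamma> * C / (2 * (c + C))"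
    using \<open>c \<ge> 0\<close> \<open>C > 0\<close> \<open>\<gamma> > 0\<close> by simp
  then have "\<sigma> < \<gamma>"
    using gap by linarith
  define K where "K = C / (\<gamma> - \<sigma>)"
  define b where "b = 3 * (\<gamma> - \<sigma>) / (\<rho> * C)"
  have K: "K = 2 * (C + c) / \<gamma>"
    using \<open>c \<ge> 0\<close> \<open>C > 0\<close> \<open>\<gamma> > 0\<close> by (simp add: K_def gap field_simps)
  have "(C + c) / \<gamma> \<le> K"
    using \<open>c \<ge> 0\<close> \<open>C > 0\<close> \<open>\<gamma> > 0\<close> by (simp add: K divide_right_mono)
  have Kb: "K * b = 3 / \<rho>"
    using \<open>C > 0\<close> \<open>\<sigma> < \<gamma>\<close> \<open>0 < \<rho>\<close> by (simp add: K_def b_def field_simps)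
  have "b \<ge> 0" "K \<ge> 0"
    using \<open>C > 0\<close> \<open>\<sigma> < \<gamma>\<close> \<open>0 < \<rho>\<close> by (simp_all add: K_def b_def)
  have sum_bound: "(\<Sum>t\<in>{2..T+1}. E t) \<le> ennreal K * (D 1 + ennreal (b + a) * U 1)" for T
  proof -
    have "(\<Sum>t\<in>{2..T+1}. E t) \<le> ennreal ((C + c) / \<gamma>) * (D 1 + ennreal a * U 1) + ennreal (3 / \<rho>) * U 1"
      using descent_sum_bound[where D = D and N = N and U = U and E = E, OF descent subgrad variance]
        params by (simp add: c_def)
    also have "\<dots> \<le> ennreal K * (D 1 + ennreal a * U 1) + ennreal K * ennreal b * U 1"
      using \<open>(C + c) / \<gamma> \<le> K\<close> \<open>b \<ge> 0\<close> \<open>K \<ge> 0\<close>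
      by (simp add: Kb ennreal_mult[symmetric] ennreal_leI mult_right_mono)
    also have "\<dots> = ennreal K * (D 1 + ennreal (b + a) * U 1)"
      using \<open>b \<ge> 0\<close> \<open>a \<ge> 0\<close> by (simp add: ennreal_plus distrib_left distrib_right mult.assoc add_ac)
    finally show ?thesis .
  qed
  have "ennreal (1 / real T) * (\<Sum>t\<in>{2..T+1}. E t)
      \<le> ennreal (C / (real T * (\<gamma> - \<sigma>))) * (D 1 + ennreal (b + a) * U 1)" if "T \<ge> 1" for T :: nat
  proof -
    have "ennreal (1 / real T) * ennreal K = ennreal (C / (real T * (\<gamma> - \<sigma>)))"
      using \<open>K \<ge> 0\<close> that by (simp add: K_def ennreal_mult[symmetric])
    then show ?thesis
      using sum_bound[of T] by (metis mult.assoc mult_left_mono zero_le)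
  qed
  then show ?thesis
    using \<open>0 < \<sigma>\<close> \<open>\<sigma> < \<gamma>\<close> unfolding b_def by blast
qed

lemma (in finite_measure) sigma_finite_subalgebra_iter_sigma:
  assumes "\<And>j. x j \<in> borel_measurable M"
  shows "sigma_finite_subalgebra M (iter_sigma M x k)"
proof -
  let ?G = "\<Union>j\<le>k. {x j -` A \<inter> space M | A. A \<in> sets borel}"
  have "?G \<subseteq> sets M"
    using assms by (auto intro: measurable_sets)
  moreover have "?G \<subseteq> Pow (space M)"
    by auto
  ultimately have "subalgebra M (iter_sigma M x k)"
    unfolding subalgebra_def iter_sigma_def
    by (simp add: sets_measure_of space_measure_of_conv sets.sigma_sets_subset)
  then show ?thesis
    by (intro finite_measure_subalgebra_is_sigma_finite)
      (simp add: finite_measure_subalgebra_def finite_measure_subalgebra_axioms_def finite_measure_axioms)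
qed

lemma (in sigma_finite_subalgebra) nn_integral_nn_cond_exp:
  assumes "f \<in> borel_measurable M"
  shows "(\<integral>\<^sup>+ \<omega>. nn_cond_exp M F f \<omega> \<partial>M) = (\<integral>\<^sup>+ \<omega>. f \<omega> \<partial>M)"
  using nn_cond_exp_intg[of "\<lambda>_. 1" f] assms by simp

lemma norm_useq_diff_sq:
  fixes x :: "nat \<Rightarrow> 'w \<Rightarrow> 'a::real_normed_vector \<times> 'b::real_normed_vector"
  shows "(norm (useq x (Suc k) \<omega> - useq x k \<omega>))\<^sup>2
    = (norm (x (Suc k) \<omega> - x k \<omega>))\<^sup>2 + (norm (x k \<omega> - x (k - 1) \<omega>))\<^sup>2
      + (norm (x (k - 1) \<omega> - x (k - 2) \<omega>))\<^sup>2"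
proof -
  have "Suc k - 2 = k - 1" by simp
  then show ?thesis by (simp add: useq_def norm_Pair add.assoc)
qed

lemma (in finite_measure) nn_integral_recursion_from_cond_exp:
  fixes x :: "nat \<Rightarrow> 'a \<Rightarrow> 'b::{real_normed_vector, second_countable_topology}
    \<times> 'c::{real_normed_vector, second_countable_topology}"
  assumes x_meas: "\<And>j. x j \<in> borel_measurable M" and Y_meas: "\<And>j. Y j \<in> borel_measurable M"
    and cond_recursion: "AE \<omega> in M.
       nn_cond_exp M (iter_sigma M x k) (\<lambda>\<omega>. ennreal (Y (Suc k) \<omega>)) \<omega>
       \<le> ennreal q * ennreal (Y k \<omega>) + ennreal V *
         (nn_cond_exp M (iter_sigma M x k) (\<lambda>\<omega>. ennreal ((norm (x (Suc k) \<omega> - x k \<omega>))\<^sup>2)) \<omega>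
          + ennreal ((norm (x k \<omega> - x (k - 1) \<omega>))\<^sup>2) + ennreal ((norm (x (k - 1) \<omega> - x (k - 2) \<omega>))\<^sup>2))"
  shows "(\<integral>\<^sup>+ \<omega>. ennreal (Y (Suc k) \<omega>) \<partial>M)
    \<le> ennreal q * (\<integral>\<^sup>+ \<omega>. ennreal (Y k \<omega>) \<partial>M)
      + ennreal V * (\<integral>\<^sup>+ \<omega>. ennreal ((norm (useq x (Suc k) \<omega> - useq x k \<omega>))\<^sup>2) \<partial>M)"
proof -
  interpret sigma_finite_subalgebra M "iter_sigma M x k"
    using x_meas by (rule sigma_finite_subalgebra_iter_sigma)
  define d0 where "d0 = (\<lambda>\<omega>. ennreal ((norm (x (Suc k) \<omega> - x k \<omega>))\<^sup>2))"
  define d1 where "d1 = (\<lambda>\<omega>. ennreal ((norm (x k \<omega> - x (k - 1) \<omega>))\<^sup>2))"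
  define d2 where "d2 = (\<lambda>\<omega>. ennreal ((norm (x (k - 1) \<omega> - x (k - 2) \<omega>))\<^sup>2))"
  have [measurable]: "d0 \<in> borel_measurable M" "d1 \<in> borel_measurable M" "d2 \<in> borel_measurable M"
    "(\<lambda>\<omega>. ennreal (Y j \<omega>)) \<in> borel_measurable M" for j
    using x_meas Y_meas unfolding d0_def d1_def d2_def by measurable
  have "(\<integral>\<^sup>+ \<omega>. ennreal (Y (Suc k) \<omega>) \<partial>M)
      = (\<integral>\<^sup>+ \<omega>. nn_cond_exp M (iter_sigma M x k) (\<lambda>\<omega>. ennreal (Y (Suc k) \<omega>)) \<omega> \<partial>M)"
    by (simp add: nn_integral_nn_cond_exp)
  also have "\<dots> \<le> (\<integral>\<^sup>+ \<omega>. ennreal q * ennreal (Y k \<omega>)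
      + ennreal V * (nn_cond_exp M (iter_sigma M x k) d0 \<omega> + d1 \<omega> + d2 \<omega>) \<partial>M)"
    using cond_recursion unfolding d0_def d1_def d2_def by (rule nn_integral_mono_AE)
  also have "\<dots> = ennreal q * (\<integral>\<^sup>+ \<omega>. ennreal (Y k \<omega>) \<partial>M)
      + ennreal V * (\<integral>\<^sup>+ \<omega>. d0 \<omega> + d1 \<omega> + d2 \<omega> \<partial>M)"
    by (simp add: nn_integral_add nn_integral_cmult nn_integral_nn_cond_exp)
  also have "(\<integral>\<^sup>+ \<omega>. d0 \<omega> + d1 \<omega> + d2 \<omega> \<partial>M)
      = (\<integral>\<^sup>+ \<omega>. ennreal ((norm (useq x (Suc k) \<omega> - useq x k \<omega>))\<^sup>2) \<partial>M)"
    unfolding d0_def d1_def d2_def norm_useq_diff_sq by (simp add: ennreal_plus[symmetric] del: ennreal_plus)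
  finally show ?thesis .
qed

theorem theorem5p5:
  fixes P :: "'w measure"
    and x1 :: "nat \<Rightarrow> 'w \<Rightarrow> 'a::euclidean_space" and x2 :: "nat \<Rightarrow> 'w \<Rightarrow> 'b::euclidean_space"
    and f :: "'a \<Rightarrow> ereal" and g :: "'b \<Rightarrow> ereal"
    and H :: "'a \<times> 'b \<Rightarrow> real" and gradH :: "'a \<times> 'b \<Rightarrow> 'a \<times> 'b"
    and n :: nat and h :: "nat \<Rightarrow> 'a \<times> 'b \<Rightarrow> real" and gradh :: "nat \<Rightarrow> 'a \<times> 'b \<Rightarrow> 'a \<times> 'b"
    and M :: real
    and L1 :: "'b \<Rightarrow> real" and L2 :: "'a \<Rightarrow> real"
    and lam1m lam1p lam2m lam2p :: real
    and al1 al2 be1 be2 :: "nat \<Rightarrow> real" and abar1 abar2 bbar1 bbar2 :: real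
    and eps vareps :: real
    and G1 :: "nat \<Rightarrow> 'w \<Rightarrow> 'a" and G2 :: "nat \<Rightarrow> 'w \<Rightarrow> 'b"
    and Ups :: "nat \<Rightarrow> 'w \<Rightarrow> real" and V1 VU rho :: real
    and gamma C :: real
  defines "F \<equiv> (\<lambda>z. ereal (H z) + f (fst z) + g (snd z))"
    and "x \<equiv> pair_seq x1 x2"
    and "u \<equiv> useq (pair_seq x1 x2)"
    and "Fk \<equiv> iter_sigma P (pair_seq x1 x2)"
    and "S \<equiv> 4 * (rho * V1 + VU) / (rho * M) + vareps"
    and "del1 \<equiv> ((M + lam1p) * abar1 + 2 * lam1p * bbar1\<^sup>2 + (4 * (rho * V1 + VU) / (rho * M) + vareps))
                 / (1 - 2 * abar1 - eps)"
    and "del2 \<equiv> ((M + lam2p) * abar2 + 2 * lam2p * bbar2\<^sup>2 + (4 * (rho * V1 + VU) / (rho * M) + vareps))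
                 / (1 - 2 * abar2 - eps)"
  assumes prob: "prob_space P"
    \<comment> \<open>objective\<close>
    and f_proper: "proper_fun f" and f_lsc: "lsc_fun f" and f_bdd: "\<exists>c. \<forall>y. ereal c \<le> f y"
    and g_proper: "proper_fun g" and g_lsc: "lsc_fun g" and g_bdd: "\<exists>c. \<forall>y. ereal c \<le> g y"
    and H_deriv: "\<And>z. (H has_derivative (\<lambda>d. inner (gradH z) d)) (at z)"
    and H_C1: "continuous_on UNIV gradH"
    and F_inf: "(INF z. F z) > -\<infinity>"
    and n_pos: "n > 0"
    and H_sum: "\<And>z. H z = (\<Sum>i<n. h i z) / real n"
    and h_deriv: "\<And>i z. i < n \<Longrightarrow> (h i has_derivative (\<lambda>d. inner (gradh i z) d)) (at z)"
    and M_pos: "M > 0"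
    and h_lip: "\<And>i z z'. i < n \<Longrightarrow> norm (gradh i z - gradh i z') \<le> M * norm (z - z')"
    and L1_lip: "\<And>y2 y y'. norm (fst (gradH (y, y2)) - fst (gradH (y', y2))) \<le> L1 y2 * norm (y - y')"
    and L2_lip: "\<And>y1 y y'. norm (snd (gradH (y1, y)) - snd (gradH (y1, y'))) \<le> L2 y1 * norm (y - y')"
    and lam_pos: "lam1m > 0" "lam1p > 0" "lam2m > 0" "lam2p > 0"
    and L1_bnd: "\<And>k \<omega>. \<omega> \<in> space P \<Longrightarrow> lam1m \<le> L1 (x2 k \<omega>) \<and> L1 (x2 k \<omega>) \<le> lam1p"
    and L2_bnd: "\<And>k \<omega>. \<omega> \<in> space P \<Longrightarrow> lam2m \<le> L2 (x1 k \<omega>) \<and> L2 (x1 k \<omega>) \<le> lam2p"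
    \<comment> \<open>parameters\<close>
    and eps_pos: "eps > 0" and vareps_pos: "vareps > 0"
    and abar: "0 < abar1" "abar1 < (1 - eps) / 2" "0 < abar2" "abar2 < (1 - eps) / 2"
    and bbar: "0 < bbar1" "bbar1 \<le> 1" "0 < bbar2" "bbar2 \<le> 1"
    and al_bnd: "\<And>k. 0 \<le> al1 k \<and> al1 k \<le> abar1" "\<And>k. 0 \<le> al2 k \<and> al2 k \<le> abar2"
    and be_bnd: "\<And>k. 0 \<le> be1 k \<and> be1 k \<le> bbar1" "\<And>k. 0 \<le> be2 k \<and> be2 k \<le> bbar2"
    \<comment> \<open>iSPALM iteration (x^(-1) = x^0 via truncated subtraction k - 1)\<close>
    and meas_x1: "\<And>k. x1 k \<in> borel_measurable P" and meas_x2: "\<And>k. x2 k \<in> borel_measurable P"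
    and meas_G1: "\<And>k. G1 k \<in> borel_measurable P" and meas_G2: "\<And>k. G2 k \<in> borel_measurable P"
    and step1: "\<And>k \<omega>. \<omega> \<in> space P \<Longrightarrow>
       x1 (Suc k) \<omega> \<in> prox (((1 + eps) * del1 + M + L1 (x2 k \<omega>) + S) / (1 - al1 k)) f
         (extrap (\<lambda>j _. al1 j) x1 k \<omega>
           - (1 / (((1 + eps) * del1 + M + L1 (x2 k \<omega>) + S) / (1 - al1 k))) *\<^sub>R G1 k \<omega>)"
    and step2: "\<And>k \<omega>. \<omega> \<in> space P \<Longrightarrow>
       x2 (Suc k) \<omega> \<in> prox (((1 + eps) * del2 + M + L2 (x1 (Suc k) \<omega>) + S) / (1 - al2 k)) g
         (extrap (\<lambda>j _. al2 j) x2 k \<omega>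
           - (1 / (((1 + eps) * del2 + M + L2 (x1 (Suc k) \<omega>) + S) / (1 - al2 k))) *\<^sub>R G2 k \<omega>)"
    \<comment> \<open>inertial variance-reduced estimator G1 k, G2 k of the partial gradients at (z1^k, x2^k), (x1^(k+1), z2^k)\<close>
    and V_nonneg: "V1 \<ge> 0" "VU \<ge> 0" and rho: "0 < rho" "rho \<le> 1"
    and Ups_meas: "\<And>k. Ups k \<in> borel_measurable P" and Ups_nonneg: "\<And>k \<omega>. \<omega> \<in> space P \<Longrightarrow> Ups k \<omega> \<ge> 0"
    and Ups_1: "(\<integral>\<^sup>+ \<omega>. ennreal (Ups 1 \<omega>) \<partial>P) < \<infinity>"
    and vr_i: "\<And>k. AE \<omega> in P.
       nn_cond_exp P (Fk k) (\<lambda>\<omega>. ennreal ((norm (G1 k \<omega> - fst (gradH (extrap (\<lambda>j _. be1 j) x1 k \<omega>, x2 k \<omega>))))\<^sup>2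
           + (norm (G2 k \<omega> - snd (gradH (x1 (Suc k) \<omega>, extrap (\<lambda>j _. be2 j) x2 k \<omega>))))\<^sup>2)) \<omega>
       \<le> ennreal (Ups k \<omega>) + ennreal V1 * (nn_cond_exp P (Fk k) (\<lambda>\<omega>. ennreal ((norm (x (Suc k) \<omega> - x k \<omega>))\<^sup>2)) \<omega>
           + ennreal ((norm (x k \<omega> - x (k - 1) \<omega>))\<^sup>2) + ennreal ((norm (x (k - 1) \<omega> - x (k - 2) \<omega>))\<^sup>2))"
    and vr_ii: "\<And>k. AE \<omega> in P.
       nn_cond_exp P (Fk k) (\<lambda>\<omega>. ennreal (Ups (Suc k) \<omega>)) \<omega>
       \<le> ennreal (1 - rho) * ennreal (Ups k \<omega>) + ennreal VU * (nn_cond_exp P (Fk k) (\<lambda>\<omega>. ennreal ((norm (x (Suc k) \<omega> - x k \<omega>))\<^sup>2)) \<omega>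
           + ennreal ((norm (x k \<omega> - x (k - 1) \<omega>))\<^sup>2) + ennreal ((norm (x (k - 1) \<omega> - x (k - 2) \<omega>))\<^sup>2))"
    and vr_iii: "(\<lambda>k. \<integral>\<^sup>+ \<omega>. ennreal ((norm (x k \<omega> - x (k - 1) \<omega>))\<^sup>2) \<partial>P) \<longlonglongrightarrow> 0
       \<Longrightarrow> (\<lambda>k. \<integral>\<^sup>+ \<omega>. ennreal (Ups k \<omega>) \<partial>P) \<longlonglongrightarrow> 0"
    \<comment> \<open>the constants gamma and C\<close>
    and gamma_pos: "gamma > 0"
    and descent: "\<And>k. (\<integral>\<^sup>+ \<omega>. e2ennreal (Psi F del1 del2 S (u (Suc k) \<omega>) - (INF v. Psi F del1 del2 S v)) \<partial>P)
         + ennreal gamma * (\<integral>\<^sup>+ \<omega>. ennreal ((norm (u (Suc k) \<omega> - u k \<omega>))\<^sup>2) \<partial>P)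
         + ennreal (1 / (M * rho)) * (\<integral>\<^sup>+ \<omega>. ennreal (Ups (Suc k) \<omega>) \<partial>P)
       \<le> (\<integral>\<^sup>+ \<omega>. e2ennreal (Psi F del1 del2 S (u k \<omega>) - (INF v. Psi F del1 del2 S v)) \<partial>P)
         + ennreal (1 / (M * rho)) * (\<integral>\<^sup>+ \<omega>. ennreal (Ups k \<omega>) \<partial>P)"
    and C_pos: "C > 0"
    and subgrad: "\<And>k. (\<integral>\<^sup>+ \<omega>. (dist0 (limiting_subdiff F (x (Suc k) \<omega>)))\<^sup>2 \<partial>P)
       \<le> ennreal C * (\<integral>\<^sup>+ \<omega>. ennreal ((norm (u (Suc k) \<omega> - u k \<omega>))\<^sup>2) \<partial>P)
         + 3 * (\<integral>\<^sup>+ \<omega>. ennreal (Ups k \<omega>) \<partial>P)"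
  shows "\<exists>\<sigma>. 0 < \<sigma> \<and> \<sigma> < gamma \<and> (\<forall>T::nat. T \<ge> 1 \<longrightarrow>
     ennreal (1 / real T) * (\<Sum>t\<in>{2..T+1}. \<integral>\<^sup>+ \<omega>. (dist0 (limiting_subdiff F (x t \<omega>)))\<^sup>2 \<partial>P)
     \<le> ennreal (C / (real T * (gamma - \<sigma>))) *
        ((\<integral>\<^sup>+ \<omega>. e2ennreal (Psi F del1 del2 S (u 1 \<omega>) - (INF v. Psi F del1 del2 S v)) \<partial>P)
         + ennreal (3 * (gamma - \<sigma>) / (rho * C) + 1 / (M * rho)) * (\<integral>\<^sup>+ \<omega>. ennreal (Ups 1 \<omega>) \<partial>P)))"
proof -
  interpret prob_space P by (rule prob)
  have x_meas: "x j \<in> borel_measurable P" for j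
    using meas_x1[of j] meas_x2[of j] unfolding x_def pair_seq_def by measurable
  have variance: "(\<integral>\<^sup>+ \<omega>. ennreal (Ups (Suc k) \<omega>) \<partial>P)
      \<le> ennreal (1 - rho) * (\<integral>\<^sup>+ \<omega>. ennreal (Ups k \<omega>) \<partial>P)
        + ennreal VU * (\<integral>\<^sup>+ \<omega>. ennreal ((norm (u (Suc k) \<omega> - u k \<omega>))\<^sup>2) \<partial>P)" for k
    using nn_integral_recursion_from_cond_exp[OF x_meas Ups_meas vr_ii[unfolded Fk_def x_def[symmetric]]]
    unfolding u_def x_def[symmetric] .
  show ?thesis
    by (rule averaged_descent_rate[where D = "\<lambda>k. \<integral>\<^sup>+ \<omega>. e2ennreal (Psi F del1 del2 S (u k \<omega>) - (INF v. Psi F del1 del2 S v)) \<partial>P"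
          and N = "\<lambda>k. \<integral>\<^sup>+ \<omega>. ennreal ((norm (u (Suc k) \<omega> - u k \<omega>))\<^sup>2) \<partial>P"
          and U = "\<lambda>k. \<integral>\<^sup>+ \<omega>. ennreal (Ups k \<omega>) \<partial>P"
          and E = "\<lambda>t. \<integral>\<^sup>+ \<omega>. (dist0 (limiting_subdiff F (x t \<omega>)))\<^sup>2 \<partial>P",
          OF descent subgrad variance gamma_pos C_pos rho V_nonneg(2)])
      (use M_pos rho in simp)
qed

end
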